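(* Let $a_0,a_1,a_3\in\mathbb{C}$. The third-order recursion $$z_n = \frac{a_3 z_{n-3} + z_{n-2} + a_1 z_{n-1} + a_0}{z_{n-3}}$$ is periodic with period $8$ (i.e. $z_9=z_1$, $z_{10}=z_2$, $z_{11}=z_3$ in $\mathbb{C}(z_1,z_2,z_3)$) if and only if $(a_0,a_1,a_3)=(-1,-1,0)$ or $(a_0,a_1,a_3)=(1,1,0)$.
   Context: Let $z_1,z_2,z_3$ be independent indeterminates over $\mathbb{C}$ and define $z_n\in\mathbb{C}(z_1,z_2,z_3)$ for $n\ge4$ by the recursion. A third-order recursion is periodic with period $k$ if all iterates are well-defined elements of $\mathbb{C}(z_1,z_2,z_3)$ (no denominator identically zero) and $z_{k+1}=z_1$, $z_{k+2}=z_2$, $z_{k+3}=z_3$. *)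

theory Defs
  imports "HOL-Computational_Algebra.Polynomial" "HOL-Computational_Algebra.Fraction_Field"
begin

text \<open>The rational function field C(z1,z2,z3), realised as the fraction field of
  the polynomial ring C[z1][z2][z3] = complex poly poly poly.\<close>

type_synonym ratfun3 = "complex poly poly poly fract"

definition var1 :: ratfun3 where "var1 = Fract [:[:[:0, 1:]:]:] 1"
definition var2 :: ratfun3 where "var2 = Fract [:[:0, 1:]:] 1"
definition var3 :: ratfun3 where "var3 = Fract [:0, 1:] 1"

definition cst :: "complex \<Rightarrow> ratfun3" where "cst c = Fract [:[:[:c:]:]:] 1"

text \<open>zs n is z_(n+1): zs 0 = z1, zs 1 = z2, zs 2 = z3 and
  z_n = (a3 z_(n-3) + z_(n-2) + a1 z_(n-1) + a0) / z_(n-3).\<close>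
fun zs :: "complex \<Rightarrow> complex \<Rightarrow> complex \<Rightarrow> nat \<Rightarrow> ratfun3" where
  "zs a0 a1 a3 0 = var1"
| "zs a0 a1 a3 (Suc 0) = var2"
| "zs a0 a1 a3 (Suc (Suc 0)) = var3"
| "zs a0 a1 a3 (Suc (Suc (Suc n))) =
     (cst a3 * zs a0 a1 a3 n + zs a0 a1 a3 (Suc n) + cst a1 * zs a0 a1 a3 (Suc (Suc n)) + cst a0)
       / zs a0 a1 a3 n"

text \<open>Periodic with period k: every iterate is well defined (no denominator, i.e. no
  z_n, is identically zero) and z_(k+1) = z1, z_(k+2) = z2, z_(k+3) = z3.\<close>
definition periodic_with :: "complex \<Rightarrow> complex \<Rightarrow> complex \<Rightarrow> nat \<Rightarrow> bool" where
  "periodic_with a0 a1 a3 k \<longleftrightarrow>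
     (\<forall>n. zs a0 a1 a3 n \<noteq> 0) \<and>
     zs a0 a1 a3 k = var1 \<and> zs a0 a1 a3 (k + 1) = var2 \<and> zs a0 a1 a3 (k + 2) = var3"

end

theory Submission
  imports Defs "HOL-Computational_Algebra.Polynomial_Factorial"
begin

(* Write x, y, z for z_1, z_2, z_3; recall that zs n is z_(n+1), so zs 5 is z_6.
   Three forward steps of the recursion give x y z * z_6 = fwd_num5 (x, y, z).  If the
   recursion has period 8, then (z_9, z_10, z_11) = (x, y, z), and three backward steps give
   (x - a3) (y - a3) (z - a3) * z_6 = bwd_num5 (x, y, z).  Eliminating z_6 yields the
   polynomial identity period8_defect (x, y, z) = 0, which holds identically in C[x, y, z];
   evaluating it at a few complex points forces a3 = 0, a1^2 = 1 and a0 = a1.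
   Conversely, for (1, 1, 0) (Todd's recurrence) and for (-1, -1, 0) the iterates
   z_4, ..., z_8 are explicit rational functions, the orbit closes up after eight steps, and
   all numerators involved are non-zero at (1, 1, 1). *)

lemma recurrence_shift_period:
  fixes w :: "nat \<Rightarrow> 'a"
  assumes rec: "\<And>n. w (n + 3) = F (w n) (w (n + 1)) (w (n + 2))"
    and period: "w k = w 0" "w (k + 1) = w 1" "w (k + 2) = w 2"
  shows "w (n + k) = w n"
proof (induction n rule: less_induct)
  case (less n)
  show ?case
  proof (cases "n < 3")
    case True
    then consider "n = 0" | "n = 1" | "n = 2" by linarith
    then show ?thesis using period by cases (simp_all add: add.commute)
  next
    case False
    then obtain m where n: "n = m + 3" by (metis add.commute le_Suc_ex not_less)
    have "w (m + 3 + k) = F (w (m + k)) (w (m + k + 1)) (w (m + k + 2))"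
      using rec[of "m + k"] by (simp add: add_ac)
    also have "\<dots> = F (w m) (w (m + 1)) (w (m + 2))"
      using less.IH[of m] less.IH[of "m + 1"] less.IH[of "m + 2"] n by (simp add: add_ac)
    also have "\<dots> = w (m + 3)"
      by (rule rec[symmetric])
    finally show ?thesis by (simp add: n)
  qed
qed

lemma recurrence_mod_period:
  fixes w :: "nat \<Rightarrow> 'a"
  assumes "\<And>n. w (n + 3) = F (w n) (w (n + 1)) (w (n + 2))"
    and "w k = w 0" "w (k + 1) = w 1" "w (k + 2) = w 2"
  shows "w (n mod k) = w n"
proof -
  have "w (n mod k + q * k) = w (n mod k)" for q
  proof (induction q)
    case (Suc q)
    have "w (n mod k + Suc q * k) = w ((n mod k + q * k) + k)" by (simp add: algebra_simps)
    also have "\<dots> = w (n mod k + q * k)" by (rule recurrence_shift_period[OF assms])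
    finally show ?case using Suc.IH by simp
  qed simp
  then show ?thesis by (metis mod_div_mult_eq)
qed

definition fwd_num5 :: "'a::comm_ring_1 \<Rightarrow> 'a \<Rightarrow> 'a \<Rightarrow> 'a \<Rightarrow> 'a \<Rightarrow> 'a \<Rightarrow> 'a" where
  "fwd_num5 a0 a1 a3 x y z =
     x * y * (a3 * z + a0) + y * (a3 * x + y + a1 * z + a0)
     + a1 * (x * (a3 * y + z + a0) + a1 * (a3 * x + y + a1 * z + a0))"

definition bwd_num5 :: "'a::comm_ring_1 \<Rightarrow> 'a \<Rightarrow> 'a \<Rightarrow> 'a \<Rightarrow> 'a \<Rightarrow> 'a \<Rightarrow> 'a" where
  "bwd_num5 a0 a1 a3 x y z =
     (1 + a1 * (y - a3)) * (x + a1 * y + a0) + (a1 * x + a0) * (z - a3)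
     + a0 * (y - a3) * (z - a3)"

definition period8_defect :: "'a::comm_ring_1 \<Rightarrow> 'a \<Rightarrow> 'a \<Rightarrow> 'a \<Rightarrow> 'a \<Rightarrow> 'a \<Rightarrow> 'a" where
  "period8_defect a0 a1 a3 x y z =
     x * y * z * bwd_num5 a0 a1 a3 x y z
     - (x - a3) * (y - a3) * (z - a3) * fwd_num5 a0 a1 a3 x y z"

lemma fwd_num5_eq:
  fixes x y z u v t :: "'a::comm_ring_1"
  assumes "u * x = a3 * x + y + a1 * z + a0"
    and "v * y = a3 * y + z + a1 * u + a0"
    and "t * z = a3 * z + u + a1 * v + a0"
  shows "x * y * z * t = fwd_num5 a0 a1 a3 x y z"
proof -
  have "x * y * z * t - fwd_num5 a0 a1 a3 x y z =
      x * y * (t * z - (a3 * z + u + a1 * v + a0))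
      + (y + a1 ^ 2) * (u * x - (a3 * x + y + a1 * z + a0))
      + a1 * x * (v * y - (a3 * y + z + a1 * u + a0))"
    unfolding fwd_num5_def by (simp add: algebra_simps power2_eq_square)
  then show ?thesis using assms by simp
qed

lemma bwd_num5_eq:
  fixes x y z u v t :: "'a::comm_ring_1"
  assumes "x * t = a3 * t + u + a1 * v + a0"
    and "y * u = a3 * u + v + a1 * x + a0"
    and "z * v = a3 * v + x + a1 * y + a0"
  shows "(x - a3) * (y - a3) * (z - a3) * t = bwd_num5 a0 a1 a3 x y z"
proof -
  have "(x - a3) * (y - a3) * (z - a3) * t - bwd_num5 a0 a1 a3 x y z =
      (y - a3) * (z - a3) * (x * t - (a3 * t + u + a1 * v + a0))
      + (z - a3) * (y * u - (a3 * u + v + a1 * x + a0))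
      + (1 + a1 * (y - a3)) * (z * v - (a3 * v + x + a1 * y + a0))"
    unfolding bwd_num5_def by (simp add: algebra_simps)
  then show ?thesis using assms by simp
qed

lemma period8_defect_eq_0:
  fixes w :: "nat \<Rightarrow> 'a::comm_ring_1"
  assumes rel: "\<And>n. w (n + 3) * w n = a3 * w n + w (n + 1) + a1 * w (n + 2) + a0"
    and period: "w 8 = w 0" "w 9 = w 1" "w 10 = w 2"
  shows "period8_defect a0 a1 a3 (w 0) (w 1) (w 2) = 0"
proof -
  note r = rel[of 0] rel[of 1] rel[of 2] rel[of 5] rel[of 6] rel[of 7]
  note r = r[simplified add_numeral_special arith_simps period]
  have fwd: "fwd_num5 a0 a1 a3 (w 0) (w 1) (w 2) = w 0 * w 1 * w 2 * w 5"
    by (rule fwd_num5_eq[OF r(1-3), symmetric])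
  have bwd: "bwd_num5 a0 a1 a3 (w 0) (w 1) (w 2) = (w 0 - a3) * (w 1 - a3) * (w 2 - a3) * w 5"
    by (rule bwd_num5_eq[OF r(4-6), symmetric])
  show ?thesis
    unfolding period8_defect_def fwd bwd by (simp add: ac_simps)
qed

lemma params_if_period8_defect_vanishes:
  fixes a0 a1 a3 :: "'a::field_char_0"
  assumes vanish: "\<And>x y z. period8_defect a0 a1 a3 x y z = 0"
  shows "(a0, a1, a3) = (-1, -1, 0) \<or> (a0, a1, a3) = (1, 1, 0)"
proof -
  let ?P = "period8_defect a0 a1 a3"
  have "2 * a3 ^ 3 = 6 * ?P a3 a3 1 - 2 * ?P a3 a3 2 + a3 * ?P a3 a3 2 - 2 * a3 * ?P a3 a3 1"
    unfolding period8_defect_def fwd_num5_def bwd_num5_def by algebra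
  then have a3: "a3 = 0" by (simp add: vanish)
  let ?Q = "period8_defect a0 a1 0"
  have "6 * (a1 ^ 2 - 1) = 3 * ?Q 1 1 1 - 3 * ?Q 1 2 1 + ?Q 1 3 1"
    unfolding period8_defect_def fwd_num5_def bwd_num5_def by algebra
  then have "a1 ^ 2 = 1" using vanish a3 by simp
  then have a1: "a1 = 1 \<or> a1 = -1" by (simp add: power2_eq_1_iff)
  have "4 * (a0 - a1) = 4 * ?Q 1 1 1 - 2 * ?Q 1 2 1 - 2 * ?Q 1 1 2 + ?Q 1 2 2"
    unfolding period8_defect_def fwd_num5_def bwd_num5_def by algebra
  then have "a0 = a1" using vanish a3 by simp
  with a1 a3 show ?thesis by auto
qed

lemma orbit_1_1_0:
  fixes w :: "nat \<Rightarrow> 'a::field"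
  assumes rec: "\<And>n. w (n + 3) = (w (n + 1) + w (n + 2) + 1) / w n"
    and init: "w 0 = x" "w 1 = y" "w 2 = z"
    and nonzero: "x \<noteq> 0" "y \<noteq> 0" "z \<noteq> 0"
      "1 + y + z \<noteq> 0" "1 + x + y \<noteq> 0" "1 + x + y + z + x * z \<noteq> 0"
  shows "w 8 = x" and "w 9 = y" and "w 10 = z" and "\<forall>n<8. w n \<noteq> 0"
proof -
  (* plain simp would turn w 1 into w (Suc 0) and break the unfolding below *)
  note r = rec[of 0] rec[of 1] rec[of 2] rec[of 3] rec[of 4] rec[of 5] rec[of 6] rec[of 7]
  note r = r[simplified add_numeral_special arith_simps]
  note solve = nonzero_divide_eq_eq[THEN iffD2]
  have w3: "w 3 = (1 + y + z) / x"
    unfolding r(1) init by (rule solve) (use nonzero in \<open>simp, simp add: field_simps\<close>)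
  have w4: "w 4 = (1 + x + y + z + x * z) / (x * y)"
    unfolding r(2) init w3 by (rule solve) (use nonzero in \<open>simp, simp add: field_simps\<close>)
  have w5: "w 5 = (1 + x + y) * (1 + y + z) / (x * y * z)"
    unfolding r(3) init w3 w4 by (rule solve) (use nonzero in \<open>simp, simp add: field_simps\<close>)
  have w6: "w 6 = (1 + x + y + z + x * z) / (y * z)"
    unfolding r(4) w3 w4 w5 by (rule solve) (use nonzero in \<open>simp, simp add: field_simps\<close>)
  have w7: "w 7 = (1 + x + y) / z"
    unfolding r(5) w4 w5 w6 by (rule solve) (use nonzero in \<open>simp, simp add: field_simps\<close>)
  show w8: "w 8 = x"
    unfolding r(6) w5 w6 w7 by (rule solve) (use nonzero in \<open>simp, simp add: field_simps\<close>)
  show w9: "w 9 = y"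
    unfolding r(7) w6 w7 w8 by (rule solve) (use nonzero in \<open>simp, simp add: field_simps\<close>)
  show "w 10 = z"
    unfolding r(8) w7 w8 w9 by (rule solve) (use nonzero in \<open>simp, simp add: field_simps\<close>)
  show "\<forall>n<8. w n \<noteq> 0"
    using init w3 w4 w5 w6 w7 nonzero by (auto simp: less_Suc_eq numeral_eq_Suc)
qed

lemma orbit_m1_m1_0:
  fixes w :: "nat \<Rightarrow> 'a::field"
  assumes rec: "\<And>n. w (n + 3) = (w (n + 1) - w (n + 2) - 1) / w n"
    and init: "w 0 = x" "w 1 = y" "w 2 = z"
    and nonzero: "x \<noteq> 0" "y \<noteq> 0" "z \<noteq> 0" "y - z - 1 \<noteq> 0" "x - y - 1 \<noteq> 0"
      "1 - x - y + z + x * z \<noteq> 0" "y * y - x * y - y * z - x * z + x - z - 1 \<noteq> 0"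
      "x - y - z - x * z - 1 \<noteq> 0"
  shows "w 8 = x" and "w 9 = y" and "w 10 = z" and "\<forall>n<8. w n \<noteq> 0"
proof -
  note r = rec[of 0] rec[of 1] rec[of 2] rec[of 3] rec[of 4] rec[of 5] rec[of 6] rec[of 7]
  note r = r[simplified add_numeral_special arith_simps]
  note solve = nonzero_divide_eq_eq[THEN iffD2]
  have w3: "w 3 = (y - z - 1) / x"
    unfolding r(1) init by (rule solve) (use nonzero in \<open>simp, simp add: field_simps\<close>)
  have w4: "w 4 = (1 - x - y + z + x * z) / (x * y)"
    unfolding r(2) init w3 by (rule solve) (use nonzero in \<open>simp, simp add: field_simps\<close>)
  have w5: "w 5 = (y * y - x * y - y * z - x * z + x - z - 1) / (x * y * z)"
    unfolding r(3) init w3 w4 by (rule solve) (use nonzero in \<open>simp, simp add: field_simps\<close>)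
  have w6: "w 6 = (x - y - z - x * z - 1) / (y * z)"
    unfolding r(4) w3 w4 w5 by (rule solve) (use nonzero in \<open>simp, simp add: field_simps\<close>)
  have w7: "w 7 = (x - y - 1) / z"
    unfolding r(5) w4 w5 w6 by (rule solve) (use nonzero in \<open>simp, simp add: field_simps\<close>)
  show w8: "w 8 = x"
    unfolding r(6) w5 w6 w7 by (rule solve) (use nonzero in \<open>simp, simp add: field_simps\<close>)
  show w9: "w 9 = y"
    unfolding r(7) w6 w7 w8 by (rule solve) (use nonzero in \<open>simp, simp add: field_simps\<close>)
  show "w 10 = z"
    unfolding r(8) w7 w8 w9 by (rule solve) (use nonzero in \<open>simp, simp add: field_simps\<close>)
  show "\<forall>n<8. w n \<noteq> 0"
    using init w3 w4 w5 w6 w7 nonzero by (auto simp: less_Suc_eq numeral_eq_Suc)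
qed

definition pvar1 :: "'a::comm_semiring_1 poly poly poly" where "pvar1 = [:[:[:0, 1:]:]:]"
definition pvar2 :: "'a::comm_semiring_1 poly poly poly" where "pvar2 = [:[:0, 1:]:]"
definition pvar3 :: "'a::comm_semiring_1 poly poly poly" where "pvar3 = [:0, 1:]"
definition pconst :: "'a::zero \<Rightarrow> 'a poly poly poly" where "pconst c = [:[:[:c:]:]:]"

definition poly3 :: "'a::comm_semiring_0 poly poly poly \<Rightarrow> 'a \<Rightarrow> 'a \<Rightarrow> 'a \<Rightarrow> 'a" where
  "poly3 p x y z = poly (poly (poly p [:[:z:]:]) [:y:]) x"

lemma poly3_0 [simp]: "poly3 0 x y z = 0"
  and poly3_1 [simp]: "poly3 1 x y z = (1 :: 'a::comm_semiring_1)"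
  and poly3_add [simp]: "poly3 (p + q) x y z = poly3 p x y z + poly3 q x y z"
  and poly3_mult [simp]: "poly3 (p * q) x y z = poly3 p x y z * poly3 q x y z"
  and poly3_pvar1 [simp]: "poly3 pvar1 x y z = x"
  and poly3_pvar2 [simp]: "poly3 pvar2 x y z = y"
  and poly3_pvar3 [simp]: "poly3 pvar3 x y z = z"
  and poly3_pconst [simp]: "poly3 (pconst c) x y z = c"
  by (simp_all add: poly3_def pvar1_def pvar2_def pvar3_def pconst_def)

lemma poly3_diff [simp]:
  "poly3 (p - q) x y z = poly3 p x y z - poly3 (q :: 'a::comm_ring poly poly poly) x y z"
  by (simp add: poly3_def)

lemma to_fract_pvar [simp]:
  "to_fract pvar1 = var1" "to_fract pvar2 = var2" "to_fract pvar3 = var3"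
  by (simp_all add: to_fract_def pvar1_def pvar2_def pvar3_def var1_def var2_def var3_def)

lemma to_fract_pconst [simp]: "to_fract (pconst c) = cst c"
  by (simp add: to_fract_def pconst_def cst_def)

lemma to_fract_nonzero_if_poly3: "poly3 p x y z \<noteq> 0 \<Longrightarrow> to_fract p \<noteq> 0"
  by auto

lemma var_nonzero: "var1 \<noteq> 0" "var2 \<noteq> 0" "var3 \<noteq> 0"
  using to_fract_nonzero_if_poly3[of pvar1 "1::complex" 1 1]
    to_fract_nonzero_if_poly3[of pvar2 "1::complex" 1 1]
    to_fract_nonzero_if_poly3[of pvar3 "1::complex" 1 1]
  by simp_all

lemma cst_0 [simp]: "cst 0 = 0"
  by (simp add: cst_def Zero_fract_def)

lemma cst_1 [simp]: "cst 1 = 1"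
  by (simp add: cst_def One_fract_def pCons_one)

lemma cst_uminus [simp]: "cst (- c) = - cst c"
  by (simp add: cst_def)

lemma zs_1 [simp]: "zs a0 a1 a3 1 = var2"
  and zs_2 [simp]: "zs a0 a1 a3 2 = var3"
  by (simp_all add: numeral_2_eq_2)

lemma zs_add3:
  "zs a0 a1 a3 (n + 3) =
     (cst a3 * zs a0 a1 a3 n + zs a0 a1 a3 (n + 1) + cst a1 * zs a0 a1 a3 (n + 2) + cst a0)
       / zs a0 a1 a3 n"
  by (simp add: eval_nat_numeral)

lemma periodic_withI:
  assumes "0 < k"
    and nonzero: "\<And>n. n < k \<Longrightarrow> zs a0 a1 a3 n \<noteq> 0"
    and period: "zs a0 a1 a3 k = var1" "zs a0 a1 a3 (k + 1) = var2" "zs a0 a1 a3 (k + 2) = var3"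
  shows "periodic_with a0 a1 a3 k"
proof -
  have "zs a0 a1 a3 (n mod k) = zs a0 a1 a3 n" for n
    by (rule recurrence_mod_period[where F = "\<lambda>x y z. (cst a3 * x + y + cst a1 * z + cst a0) / x",
          OF zs_add3]) (use period in simp_all)
  then have "zs a0 a1 a3 n \<noteq> 0" for n
    by (metis nonzero \<open>0 < k\<close> mod_less_divisor)
  then show ?thesis
    unfolding periodic_with_def using period by simp
qed

lemma periodic_with_1_1_0: "periodic_with 1 1 0 8"
proof -
  have rec: "zs 1 1 0 (n + 3) = (zs 1 1 0 (n + 1) + zs 1 1 0 (n + 2) + 1) / zs 1 1 0 n" for n
    by (simp add: zs_add3 add_ac)
  note nonzero_at_111 = to_fract_nonzero_if_poly3[where x = "1::complex" and y = 1 and z = 1]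
  have nonzero: "1 + var2 + var3 \<noteq> 0" "1 + var1 + var2 \<noteq> 0"
      "1 + var1 + var2 + var3 + var1 * var3 \<noteq> 0"
    using nonzero_at_111[of "1 + pvar2 + pvar3"] nonzero_at_111[of "1 + pvar1 + pvar2"]
      nonzero_at_111[of "1 + pvar1 + pvar2 + pvar3 + pvar1 * pvar3"]
    by simp_all
  note orbit = orbit_1_1_0[OF rec zs.simps(1) zs_1 zs_2 var_nonzero nonzero]
  show ?thesis
    by (rule periodic_withI) (use orbit in auto)
qed

lemma periodic_with_m1_m1_0: "periodic_with (-1) (-1) 0 8"
proof -
  have rec: "zs (-1) (-1) 0 (n + 3) =
      (zs (-1) (-1) 0 (n + 1) - zs (-1) (-1) 0 (n + 2) - 1) / zs (-1) (-1) 0 n" for n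
    by (simp add: zs_add3)
  note nonzero_at_111 = to_fract_nonzero_if_poly3[where x = "1::complex" and y = 1 and z = 1]
  have nonzero: "var2 - var3 - 1 \<noteq> 0" "var1 - var2 - 1 \<noteq> 0"
      "1 - var1 - var2 + var3 + var1 * var3 \<noteq> 0"
      "var2 * var2 - var1 * var2 - var2 * var3 - var1 * var3 + var1 - var3 - 1 \<noteq> 0"
      "var1 - var2 - var3 - var1 * var3 - 1 \<noteq> 0"
    using nonzero_at_111[of "pvar2 - pvar3 - 1"] nonzero_at_111[of "pvar1 - pvar2 - 1"]
      nonzero_at_111[of "1 - pvar1 - pvar2 + pvar3 + pvar1 * pvar3"]
      nonzero_at_111[of "pvar2 * pvar2 - pvar1 * pvar2 - pvar2 * pvar3 - pvar1 * pvar3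
        + pvar1 - pvar3 - 1"]
      nonzero_at_111[of "pvar1 - pvar2 - pvar3 - pvar1 * pvar3 - 1"]
    by simp_all
  note orbit = orbit_m1_m1_0[OF rec zs.simps(1) zs_1 zs_2 var_nonzero nonzero]
  show ?thesis
    by (rule periodic_withI) (use orbit in auto)
qed

lemma period8_defect_eq_0_if_periodic:
  assumes "periodic_with a0 a1 a3 8"
  shows "period8_defect a0 a1 a3 x y z = 0"
proof -
  have nonzero: "\<And>n. zs a0 a1 a3 n \<noteq> 0"
    and period: "zs a0 a1 a3 8 = var1" "zs a0 a1 a3 9 = var2" "zs a0 a1 a3 10 = var3"
    using assms by (simp_all add: periodic_with_def)
  have rel: "zs a0 a1 a3 (n + 3) * zs a0 a1 a3 n =
      cst a3 * zs a0 a1 a3 n + zs a0 a1 a3 (n + 1) + cst a1 * zs a0 a1 a3 (n + 2) + cst a0" for n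
    using nonzero[of n] by (simp add: zs_add3)
  have "period8_defect (cst a0) (cst a1) (cst a3) (zs a0 a1 a3 0) (zs a0 a1 a3 1) (zs a0 a1 a3 2) = 0"
    by (rule period8_defect_eq_0[OF rel]) (simp_all add: period)
  moreover have "to_fract (period8_defect (pconst a0) (pconst a1) (pconst a3) pvar1 pvar2 pvar3) =
      period8_defect (cst a0) (cst a1) (cst a3) var1 var2 var3"
    by (simp add: period8_defect_def fwd_num5_def bwd_num5_def)
  ultimately have "period8_defect (pconst a0) (pconst a1) (pconst a3) pvar1 pvar2 pvar3 = 0"
    by simp
  then have "poly3 (period8_defect (pconst a0) (pconst a1) (pconst a3) pvar1 pvar2 pvar3) x y z = 0"
    by simp
  then show ?thesis
    by (simp add: period8_defect_def fwd_num5_def bwd_num5_def)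
qed

theorem mainTheorem6:
  fixes a0 a1 a3 :: complex
  shows "periodic_with a0 a1 a3 8 \<longleftrightarrow> (a0, a1, a3) = (-1, -1, 0) \<or> (a0, a1, a3) = (1, 1, 0)"
proof
  assume "periodic_with a0 a1 a3 8"
  then show "(a0, a1, a3) = (-1, -1, 0) \<or> (a0, a1, a3) = (1, 1, 0)"
    by (intro params_if_period8_defect_vanishes period8_defect_eq_0_if_periodic)
next
  assume "(a0, a1, a3) = (-1, -1, 0) \<or> (a0, a1, a3) = (1, 1, 0)"
  then show "periodic_with a0 a1 a3 8"
    using periodic_with_m1_m1_0 periodic_with_1_1_0 by auto
qed

end
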